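(* Fix any quantile vector $\mathbf{q}=(q_1\ge\dots\ge q_N)$ with $q_i\in(0,1)$. Then $\mathrm{STR}(\mathbf{q},\pi)\ge\mathrm{OPT}(\mathbf{q},\pi)$ for every $\pi\in\Pi_{n,m,c}\setminus\mathcal{E}_2$.
   Context: Setting: distributions $F_B,F_S$ with quantile functions $b(q)=\inf\{x:\Pr_{b\sim F_B}[b\le x]\ge q\}$, $s(q)=\inf\{x:\Pr_{s\sim F_S}[s\le x]\ge q\}$, and $b(q)\ge s(q)$ for all $q\in(0,1)$ ($F_B$ first-order stochastically dominates $F_S$). Integers $m\ge n\ge 20$ and $c\ge1$; $N=m+n+2c$. $\Pi_{n,m,c}$ is the set of maps $\pi:[N]\to\{\mathrm{BO},\mathrm{BN},\mathrm{SO},\mathrm{SN}\}$ with $m$, $c$, $n$, $c$ preimages respectively of $\mathrm{BO},\mathrm{BN},\mathrm{SO},\mathrm{SN}$; write $B_{\mathrm{Old}}^\pi,B_{\mathrm{New}}^\pi,S_{\mathrm{Old}}^\pi,S_{\mathrm{New}}^\pi$ for these preimages. Index $i$ labeled as buyer gives a buyer with value $b(q_i)$, labeled as seller gives a seller with value $s(q_i)$; the original market consists of old buyers and old sellers, the augmented market of all agents. $\mathrm{OPT}(\mathbf{q},\pi)$ is the first-best gains from trade in the original market; $\mathrm{STR}(\mathbf{q},\pi)$ is the gains from trade of Seller Trade Reduction in the augmented market. (First best: with buyer values $b^{(1)}\ge\dots$, seller values $s^{(1)}\le\dots$, $r=\max\{i: b^{(i)}\ge s^{(i)}\}$ ($0$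 if none), trade top $r$ buyers with bottom $r$ sellers, gains $\sum_{i\le r}(b^{(i)}-s^{(i)})$. STR: with $s^{(k)}=\infty$ beyond the number of sellers, if $b^{(r)}\ge s^{(r+1)}$ trade $r$ pairs, else only the top $r-1$ buyers with bottom $r-1$ sellers.) Let $p=\lceil n/10\rceil$, $I_1=\{1,\dots,p\}$, $I_2=\{p+1,\dots,2p\}$, $J_1=\{N-p+1,\dots,N\}$, $J_2=\{N-2p+1,\dots,N-p\}$. $\mathcal{E}_1$ is the set of $\pi$ with $|I_1\cap B_{\mathrm{New}}^\pi|\ge2$, $|I_2\cap B_{\mathrm{Old}}^\pi|\ge1$, $|J_1\cap S_{\mathrm{New}}^\pi|\ge2$, $|J_2\cap S_{\mathrm{Old}}^\pi|\ge1$. $\mathcal{E}_2=\{\pi\in\Pi_{n,m,c}:\pi\notin\mathcal{E}_1,\ S_{\mathrm{New}}^\pi\subseteq\{1,\dots,2n+2c\}\}$. *)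

theory Defs
  imports "HOL-Probability.Probability"
begin

definition quantile :: "real measure \<Rightarrow> real \<Rightarrow> real" where
  "quantile M q = Inf {x. q \<le> measure M {..x}}"

datatype label = BO | BN | SO | SN

(* Pi_{n,m,c}: labelings of [N] = {1..N}, N = m+n+2c, with m, c, n, c preimages
   of BO, BN, SO, SN respectively (values outside [N] are irrelevant). *)
definition Nagents :: "nat \<Rightarrow> nat \<Rightarrow> nat \<Rightarrow> nat" where
  "Nagents n m c = m + n + 2 * c"

definition preim :: "nat \<Rightarrow> (nat \<Rightarrow> label) \<Rightarrow> label \<Rightarrow> nat set" where
  "preim N \<pi> l = {i \<in> {1..N}. \<pi> i = l}"

definition PiSet :: "nat \<Rightarrow> nat \<Rightarrow> nat \<Rightarrow> (nat \<Rightarrow> label) set" where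
  "PiSet n m c = {\<pi>. card (preim (Nagents n m c) \<pi> BO) = m
                    \<and> card (preim (Nagents n m c) \<pi> BN) = c
                    \<and> card (preim (Nagents n m c) \<pi> SO) = n
                    \<and> card (preim (Nagents n m c) \<pi> SN) = c}"

definition pp :: "nat \<Rightarrow> nat" where
  "pp n = nat \<lceil>real n / 10\<rceil>"

definition E1 :: "nat \<Rightarrow> nat \<Rightarrow> nat \<Rightarrow> (nat \<Rightarrow> label) set" where
  "E1 n m c = {\<pi> \<in> PiSet n m c.
     (let N = Nagents n m c; p = pp n in
        card ({1..p} \<inter> preim N \<pi> BN) \<ge> 2
      \<and> card ({p+1..2*p} \<inter> preim N \<pi> BO) \<ge> 1
      \<and> card ({N-p+1..N} \<inter> preim N \<pi> SN) \<ge> 2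
      \<and> card ({N-2*p+1..N-p} \<inter> preim N \<pi> SO) \<ge> 1)}"

definition E2 :: "nat \<Rightarrow> nat \<Rightarrow> nat \<Rightarrow> (nat \<Rightarrow> label) set" where
  "E2 n m c = {\<pi> \<in> PiSet n m c. \<pi> \<notin> E1 n m c
     \<and> preim (Nagents n m c) \<pi> SN \<subseteq> {1..2*n+2*c}}"

(* Generic market on value lists.  Buyers sorted decreasingly b^(1) >= b^(2) >= ...,
   sellers sorted increasingly s^(1) <= s^(2) <= ...; list positions are 0-based,
   so b^(i) = bsort!(i-1). *)
definition buyers_sorted :: "real list \<Rightarrow> real list" where
  "buyers_sorted bs = rev (sort bs)"

definition sellers_sorted :: "real list \<Rightarrow> real list" where
  "sellers_sorted ss = sort ss"

(* r = max { i : b^(i) >= s^(i) } (0 if none); s^(i) = infinity beyond the number of sellers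
   (and b^(i) is undefined beyond the number of buyers) *)
definition eff_r :: "real list \<Rightarrow> real list \<Rightarrow> nat" where
  "eff_r bs ss = Max ({0} \<union> {i. 1 \<le> i \<and> i \<le> length bs \<and> i \<le> length ss
       \<and> buyers_sorted bs ! (i-1) \<ge> sellers_sorted ss ! (i-1)})"

definition gft :: "real list \<Rightarrow> real list \<Rightarrow> nat \<Rightarrow> real" where
  "gft bs ss k = (\<Sum>i<k. buyers_sorted bs ! i - sellers_sorted ss ! i)"

definition first_best :: "real list \<Rightarrow> real list \<Rightarrow> real" where
  "first_best bs ss = gft bs ss (eff_r bs ss)"

(* Seller Trade Reduction: if b^(r) >= s^(r+1) (with s^(r+1) = infinity when there are
   only r sellers) trade r pairs, otherwise trade r-1 pairs. *)
definition str_trades :: "real list \<Rightarrow> real list \<Rightarrow> nat" where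
  "str_trades bs ss = (let r = eff_r bs ss in
     if r = 0 then 0
     else if r < length ss \<and> buyers_sorted bs ! (r-1) \<ge> sellers_sorted ss ! r then r
     else r - 1)"

definition str_gft :: "real list \<Rightarrow> real list \<Rightarrow> real" where
  "str_gft bs ss = gft bs ss (str_trades bs ss)"

definition vals :: "nat \<Rightarrow> (nat \<Rightarrow> label) \<Rightarrow> label set \<Rightarrow> (real \<Rightarrow> real) \<Rightarrow> (nat \<Rightarrow> real) \<Rightarrow> real list" where
  "vals N \<pi> L v q = map (\<lambda>i. v (q i)) (filter (\<lambda>i. \<pi> i \<in> L) [1..<N+1])"

(* OPT_gft(q,pi): first best in the original market (old buyers, old sellers) *)
definition OPT_gft :: "nat \<Rightarrow> (real \<Rightarrow> real) \<Rightarrow> (real \<Rightarrow> real) \<Rightarrow> (nat \<Rightarrow> real) \<Rightarrow> (nat \<Rightarrow> label) \<Rightarrow> real" where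
  "OPT_gft N b s q \<pi> = first_best (vals N \<pi> {BO} b q) (vals N \<pi> {SO} s q)"

definition STR_gft :: "nat \<Rightarrow> (real \<Rightarrow> real) \<Rightarrow> (real \<Rightarrow> real) \<Rightarrow> (nat \<Rightarrow> real) \<Rightarrow> (nat \<Rightarrow> label) \<Rightarrow> real" where
  "STR_gft N b s q \<pi> = str_gft (vals N \<pi> {BO, BN} b q) (vals N \<pi> {SO, SN} s q)"

end

theory Submission
  imports Defs
begin

(* Let r be the number of trades of the first best in the original market and x the value of its
   r-th highest old buyer. Adding agents can only raise the k-th highest buyer value and lower the
   k-th lowest seller value, so the augmented market still has at least r efficient trades, each
   with at least its original gain. Seller Trade Reduction keeps all r of them as soon as the
   (r+1)-th lowest augmented seller value is at most x, which holds once a single new seller has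
   value at most x.
   Outside E2 there is a new seller t and an index T < t such that either the first T indices
   contain r old buyers, whence s(q_t) <= s(q_T) <= b(q_T) <= x, or fewer than r old sellers come
   after T, whence s(q_t) <= s(q_T) <= (r-th lowest old seller) <= x. If a new seller lies beyond
   2n+2c, take T = 2n+2c, preceded by at least n >= r old buyers. In E1, take T = N-p: two new
   sellers among the last p indices leave room for at most p-2 old sellers there, while fewer than
   r old buyers before T forces r > m-p >= p-2. *)

lemma nth_iff_less_length_filter:
  assumes down_closed: "\<And>i j. i \<le> j \<Longrightarrow> j < length xs \<Longrightarrow> P (xs ! j) \<Longrightarrow> P (xs ! i)"
    and k: "k < length xs"
  shows "P (xs ! k) \<longleftrightarrow> k < length (filter P xs)"
proof
  assume "P (xs ! k)"
  then have "{..k} \<subseteq> {i. i < length xs \<and> P (xs ! i)}"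
    using down_closed k by auto
  then have "card {..k} \<le> card {i. i < length xs \<and> P (xs ! i)}"
    by (intro card_mono) auto
  then show "k < length (filter P xs)"
    by (simp add: length_filter_conv_card)
next
  assume less: "k < length (filter P xs)"
  show "P (xs ! k)"
  proof (rule ccontr)
    assume "\<not> P (xs ! k)"
    then have "{i. i < length xs \<and> P (xs ! i)} \<subseteq> {..<k}"
      using down_closed by (auto simp: not_less[symmetric])
    then have "card {i. i < length xs \<and> P (xs ! i)} \<le> k"
      by (metis card_lessThan card_mono finite_lessThan)
    then show False
      using less by (simp add: length_filter_conv_card)
  qed
qed

lemma mset_buyers_sorted [simp]: "mset (buyers_sorted xs) = mset xs"
  by (simp add: buyers_sorted_def)

lemma mset_sellers_sorted [simp]: "mset (sellers_sorted xs) = mset xs"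
  by (simp add: sellers_sorted_def)

lemma length_buyers_sorted [simp]: "length (buyers_sorted xs) = length xs"
  by (simp add: buyers_sorted_def)

lemma length_sellers_sorted [simp]: "length (sellers_sorted xs) = length xs"
  by (simp add: sellers_sorted_def)

lemma buyers_sorted_nth_antimono:
  "i \<le> j \<Longrightarrow> j < length xs \<Longrightarrow> buyers_sorted xs ! j \<le> buyers_sorted xs ! i"
  by (simp add: buyers_sorted_def rev_nth sorted_nth_mono)

lemma sellers_sorted_nth_mono:
  "i \<le> j \<Longrightarrow> j < length xs \<Longrightarrow> sellers_sorted xs ! i \<le> sellers_sorted xs ! j"
  by (simp add: sellers_sorted_def sorted_nth_mono)

lemma le_buyers_sorted_nth_iff:
  fixes xs :: "real list"
  assumes "k < length xs"
  shows "x \<le> buyers_sorted xs ! k \<longleftrightarrow> k < size {#v \<in># mset xs. x \<le> v#}"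
proof -
  have "x \<le> buyers_sorted xs ! k \<longleftrightarrow> k < length (filter ((\<le>) x) (buyers_sorted xs))"
    using assms buyers_sorted_nth_antimono
    by (intro nth_iff_less_length_filter) (auto intro: order_trans)
  then show ?thesis
    by (metis mset_buyers_sorted mset_filter size_mset)
qed

lemma sellers_sorted_nth_le_iff:
  fixes xs :: "real list"
  assumes "k < length xs"
  shows "sellers_sorted xs ! k \<le> x \<longleftrightarrow> k < size {#v \<in># mset xs. v \<le> x#}"
proof -
  have "sellers_sorted xs ! k \<le> x \<longleftrightarrow> k < length (filter (\<lambda>v. v \<le> x) (sellers_sorted xs))"
    using assms sellers_sorted_nth_mono
    by (intro nth_iff_less_length_filter) (auto intro: order_trans)
  then show ?thesis
    by (metis mset_sellers_sorted mset_filter size_mset)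
qed

lemma size_filter_mset_mono:
  "A \<subseteq># B \<Longrightarrow> size {#x \<in># A. P x#} \<le> size {#x \<in># B. P x#}"
  by (intro size_mset_mono multiset_filter_mono)

lemma buyers_sorted_nth_mono_subset:
  fixes xs ys :: "real list"
  assumes sub: "mset xs \<subseteq># mset ys" and k: "k < length xs"
  shows "buyers_sorted xs ! k \<le> buyers_sorted ys ! k"
proof -
  let ?x = "buyers_sorted xs ! k"
  have "k < size {#v \<in># mset xs. ?x \<le> v#}"
    using le_buyers_sorted_nth_iff[OF k, of ?x] by simp
  also have "\<dots> \<le> size {#v \<in># mset ys. ?x \<le> v#}"
    using sub by (rule size_filter_mset_mono)
  finally show ?thesis
    using k size_mset_mono[OF sub] by (subst le_buyers_sorted_nth_iff) auto
qed

lemma sellers_sorted_nth_antimono_subset: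
  fixes xs ys :: "real list"
  assumes sub: "mset xs \<subseteq># mset ys" and k: "k < length xs"
  shows "sellers_sorted ys ! k \<le> sellers_sorted xs ! k"
proof -
  let ?x = "sellers_sorted xs ! k"
  have "k < size {#v \<in># mset xs. v \<le> ?x#}"
    using sellers_sorted_nth_le_iff[OF k, of ?x] by simp
  also have "\<dots> \<le> size {#v \<in># mset ys. v \<le> ?x#}"
    using sub by (rule size_filter_mset_mono)
  finally show ?thesis
    using k size_mset_mono[OF sub] by (subst sellers_sorted_nth_le_iff) auto
qed

lemma finite_eff_r_candidates:
  "finite ({0} \<union> {i. 1 \<le> i \<and> i \<le> length bs \<and> i \<le> length ss
       \<and> buyers_sorted bs ! (i-1) \<ge> sellers_sorted ss ! (i-1)})"
  by (rule finite_UnI) (auto intro: finite_subset[of _ "{..length bs}"])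

lemma eff_r_ge:
  "1 \<le> i \<Longrightarrow> i \<le> length bs \<Longrightarrow> i \<le> length ss
    \<Longrightarrow> sellers_sorted ss ! (i-1) \<le> buyers_sorted bs ! (i-1) \<Longrightarrow> i \<le> eff_r bs ss"
  unfolding eff_r_def by (rule Max_ge[OF finite_eff_r_candidates]) auto

lemma eff_r_cases:
  obtains "eff_r bs ss = 0"
  | "1 \<le> eff_r bs ss" "eff_r bs ss \<le> length bs" "eff_r bs ss \<le> length ss"
    "sellers_sorted ss ! (eff_r bs ss - 1) \<le> buyers_sorted bs ! (eff_r bs ss - 1)"
proof -
  have "eff_r bs ss \<in> {0} \<union> {i. 1 \<le> i \<and> i \<le> length bs \<and> i \<le> length ss
       \<and> buyers_sorted bs ! (i-1) \<ge> sellers_sorted ss ! (i-1)}"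
    unfolding eff_r_def by (rule Max_in[OF finite_eff_r_candidates]) auto
  then show thesis
    using that by auto
qed

lemma eff_r_le_length: "eff_r bs ss \<le> length bs" "eff_r bs ss \<le> length ss"
  by (cases bs ss rule: eff_r_cases; simp)+

lemma sellers_sorted_nth_le_buyers_sorted_nth:
  fixes bs ss :: "real list"
  assumes "i < eff_r bs ss"
  shows "sellers_sorted ss ! i \<le> buyers_sorted bs ! i"
proof (cases bs ss rule: eff_r_cases)
  case 2
  then have "sellers_sorted ss ! i \<le> sellers_sorted ss ! (eff_r bs ss - 1)"
    using assms by (intro sellers_sorted_nth_mono) auto
  also have "\<dots> \<le> buyers_sorted bs ! (eff_r bs ss - 1)"
    by (fact 2)
  also have "\<dots> \<le> buyers_sorted bs ! i"
    using 2 assms by (intro buyers_sorted_nth_antimono) auto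
  finally show ?thesis .
qed (use assms in simp)

lemma gft_mono:
  fixes bs ss :: "real list"
  assumes "k \<le> k'" "k' \<le> eff_r bs ss"
  shows "gft bs ss k \<le> gft bs ss k'"
proof -
  have "gft bs ss k' = gft bs ss k + (\<Sum>i = k..<k'. buyers_sorted bs ! i - sellers_sorted ss ! i)"
    unfolding gft_def using assms(1)
    by (metis atLeast0LessThan le0 sum.atLeastLessThan_concat)
  moreover have "(\<Sum>i = k..<k'. buyers_sorted bs ! i - sellers_sorted ss ! i) \<ge> 0"
    using assms sellers_sorted_nth_le_buyers_sorted_nth[of _ bs ss]
    by (intro sum_nonneg) fastforce
  ultimately show ?thesis
    by simp
qed

lemma str_trades_le_eff_r: "str_trades bs ss \<le> eff_r bs ss"
  unfolding str_trades_def Let_def by auto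

lemma str_trades_ge:
  assumes "r \<le> eff_r bs ss"
    and "0 < r \<Longrightarrow> r < length ss \<and> sellers_sorted ss ! r \<le> buyers_sorted bs ! (r - 1)"
  shows "r \<le> str_trades bs ss"
  using assms unfolding str_trades_def Let_def by (cases "r = eff_r bs ss") auto

lemma add_mset_subseteq_of_mem_diff:
  "A \<subseteq># B \<Longrightarrow> z \<in># B - A \<Longrightarrow> add_mset z A \<subseteq># B"
  by (metis add_mset_add_single mset_subset_eq_single subset_mset.add_diff_inverse
      subset_mset.add_mono subset_mset.dual_order.refl)

lemma eff_r_mono_subset:
  fixes bs ss bs' ss' :: "real list"
  assumes buyers: "mset bs \<subseteq># mset bs'" and sellers: "mset ss \<subseteq># mset ss'"
  shows "eff_r bs ss \<le> eff_r bs' ss'"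
proof (cases bs ss rule: eff_r_cases)
  case 2
  define k where "k = eff_r bs ss - 1"
  have "sellers_sorted ss' ! k \<le> sellers_sorted ss ! k"
    using 2 sellers by (intro sellers_sorted_nth_antimono_subset) (auto simp: k_def)
  also have "\<dots> \<le> buyers_sorted bs ! k"
    using 2 by (simp add: k_def)
  also have "\<dots> \<le> buyers_sorted bs' ! k"
    using 2 buyers by (intro buyers_sorted_nth_mono_subset) (auto simp: k_def)
  finally show ?thesis
    using 2 size_mset_mono[OF buyers] size_mset_mono[OF sellers] eff_r_ge[of "eff_r bs ss" bs' ss']
    by (simp add: k_def)
qed simp

lemma gft_mono_subset:
  fixes bs ss bs' ss' :: "real list"
  assumes "mset bs \<subseteq># mset bs'" "mset ss \<subseteq># mset ss'" and "k \<le> eff_r bs ss"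
  shows "gft bs ss k \<le> gft bs' ss' k"
  unfolding gft_def
proof (intro sum_mono diff_mono)
  fix i assume "i \<in> {..<k}"
  then have "i < length bs" "i < length ss"
    using assms(3) eff_r_le_length[of bs ss] by auto
  then show "buyers_sorted bs ! i \<le> buyers_sorted bs' ! i"
    and "sellers_sorted ss' ! i \<le> sellers_sorted ss ! i"
    using assms(1,2) buyers_sorted_nth_mono_subset sellers_sorted_nth_antimono_subset by auto
qed

lemma sellers_sorted_nth_eff_r_le_of_new_seller:
  fixes bs ss ss' :: "real list"
  assumes sellers: "mset ss \<subseteq># mset ss'" and new_seller: "z \<in># mset ss' - mset ss"
    and "0 < eff_r bs ss" and cheap: "z \<le> buyers_sorted bs ! (eff_r bs ss - 1)"
  shows "eff_r bs ss < length ss' \<and> sellers_sorted ss' ! eff_r bs ss \<le> buyers_sorted bs ! (eff_r bs ss - 1)"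
proof -
  define r where "r = eff_r bs ss"
  define x where "x = buyers_sorted bs ! (r - 1)"
  have "r - 1 < size {#v \<in># mset ss. v \<le> x#}"
    using \<open>0 < eff_r bs ss\<close> eff_r_le_length(2)[of bs ss]
      sellers_sorted_nth_le_buyers_sorted_nth[of "r - 1" bs ss]
    by (subst sellers_sorted_nth_le_iff[symmetric]) (auto simp: x_def r_def)
  then have "r < size {#v \<in># add_mset z (mset ss). v \<le> x#}"
    using \<open>0 < eff_r bs ss\<close> cheap by (simp add: r_def x_def)
  also have "\<dots> \<le> size {#v \<in># mset ss'. v \<le> x#}"
    by (intro size_filter_mset_mono add_mset_subseteq_of_mem_diff sellers new_seller)
  finally have less_count: "r < size {#v \<in># mset ss'. v \<le> x#}" .
  moreover have "size {#v \<in># mset ss'. v \<le> x#} \<le> length ss'"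
    by (metis size_filter_mset_lesseq size_mset)
  ultimately have "r < length ss'"
    by linarith
  moreover have "sellers_sorted ss' ! r \<le> x"
    using sellers_sorted_nth_le_iff[OF \<open>r < length ss'\<close>, of x] less_count by simp
  ultimately show ?thesis
    by (simp add: r_def x_def)
qed

lemma first_best_le_str_gft_of_new_seller:
  fixes bs ss bs' ss' :: "real list"
  assumes buyers: "mset bs \<subseteq># mset bs'" and sellers: "mset ss \<subseteq># mset ss'"
    and new_seller: "z \<in># mset ss' - mset ss"
    and cheap: "0 < eff_r bs ss \<Longrightarrow> z \<le> buyers_sorted bs ! (eff_r bs ss - 1)"
  shows "first_best bs ss \<le> str_gft bs' ss'"
proof -
  define r where "r = eff_r bs ss"
  have "r < length ss' \<and> sellers_sorted ss' ! r \<le> buyers_sorted bs' ! (r - 1)" if "0 < r"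
  proof -
    have "r - 1 < length bs"
      using that eff_r_le_length(1)[of bs ss] by (simp add: r_def)
    then have "buyers_sorted bs ! (r - 1) \<le> buyers_sorted bs' ! (r - 1)"
      by (rule buyers_sorted_nth_mono_subset[OF buyers])
    moreover have "r < length ss' \<and> sellers_sorted ss' ! r \<le> buyers_sorted bs ! (r - 1)"
      using sellers_sorted_nth_eff_r_le_of_new_seller[OF sellers new_seller, of bs] that cheap
      by (simp add: r_def)
    ultimately show ?thesis
      by auto
  qed
  then have "r \<le> str_trades bs' ss'"
    using eff_r_mono_subset[OF buyers sellers] by (intro str_trades_ge) (simp_all add: r_def)
  have "first_best bs ss = gft bs ss r"
    by (simp add: first_best_def r_def)
  also have "\<dots> \<le> gft bs' ss' r"
    using buyers sellers by (rule gft_mono_subset) (simp add: r_def)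
  also have "\<dots> \<le> gft bs' ss' (str_trades bs' ss')"
    using \<open>r \<le> str_trades bs' ss'\<close> str_trades_le_eff_r by (rule gft_mono)
  also have "\<dots> = str_gft bs' ss'"
    by (simp add: str_gft_def)
  finally show ?thesis .
qed

lemma quantile_mono:
  assumes M: "real_distribution M" and q: "0 < q1" "q1 \<le> q2" "q2 < 1"
  shows "quantile M q1 \<le> quantile M q2"
proof -
  interpret real_distribution M by (rule M)
  have "eventually (\<lambda>x. cdf M x < q1) at_bot"
    using order_tendstoD(2)[OF cdf_lim_at_bot q(1)] .
  then obtain x0 where x0: "\<And>x. x \<le> x0 \<Longrightarrow> cdf M x < q1"
    by (auto simp: eventually_at_bot_linorder)
  have "eventually (\<lambda>x. q2 < cdf M x) at_top"
    using order_tendstoD(1)[OF cdf_lim_at_top_prob q(3)] .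
  then obtain x1 where x1: "\<And>x. x \<ge> x1 \<Longrightarrow> q2 < cdf M x"
    by (auto simp: eventually_at_top_linorder)
  have "bdd_below {x. q1 \<le> measure M {..x}}"
  proof (rule bdd_belowI)
    fix x assume "x \<in> {x. q1 \<le> measure M {..x}}"
    then show "x0 \<le> x"
      using x0[of x] by (force simp: cdf_def)
  qed
  moreover have "{x. q2 \<le> measure M {..x}} \<noteq> {}"
    using x1[of x1] by (auto simp: cdf_def intro!: exI[of _ x1])
  moreover have "{x. q2 \<le> measure M {..x}} \<subseteq> {x. q1 \<le> measure M {..x}}"
    using q by auto
  ultimately show ?thesis
    unfolding quantile_def by (intro cInf_superset_mono)
qed

lemma size_filter_mset_vals:
  "size {#u \<in># mset (vals N \<pi> L v q). P u#} = card {i \<in> {1..N}. \<pi> i \<in> L \<and> P (v (q i))}"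
proof -
  have "size {#u \<in># mset (vals N \<pi> L v q). P u#} = length (filter P (vals N \<pi> L v q))"
    by (metis mset_filter size_mset)
  also have "\<dots> = length (filter (\<lambda>i. \<pi> i \<in> L \<and> P (v (q i))) [1..<N+1])"
    by (simp add: vals_def filter_map filter_filter o_def conj_commute)
  also have "\<dots> = card {i \<in> {1..N}. \<pi> i \<in> L \<and> P (v (q i))}"
    by (subst distinct_card[symmetric]) (auto intro: arg_cong[where f = card])
  finally show ?thesis .
qed

lemma length_vals: "length (vals N \<pi> L v q) = card {i \<in> {1..N}. \<pi> i \<in> L}"
  using size_filter_mset_vals[of "\<lambda>_. True" N \<pi> L v q] by simp

lemma mset_vals_Un:
  assumes "L \<inter> L' = {}"
  shows "mset (vals N \<pi> (L \<union> L') v q) = mset (vals N \<pi> L v q) + mset (vals N \<pi> L' v q)"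
proof -
  have "{#i \<in># M. \<pi> i \<in> L \<union> L'#} = {#i \<in># M. \<pi> i \<in> L#} + {#i \<in># M. \<pi> i \<in> L'#}" for M
    using assms by (induction M) auto
  then show ?thesis
    by (simp add: vals_def)
qed

lemma mem_vals:
  assumes "t \<in> {1..N}" "\<pi> t \<in> L"
  shows "v (q t) \<in># mset (vals N \<pi> L v q)"
proof -
  have "t \<in> set (filter (\<lambda>i. \<pi> i \<in> L) [1..<N+1])"
    using assms by (simp del: upt_Suc)
  then show ?thesis
    unfolding vals_def set_mset_mset set_map by (rule imageI)
qed

lemma le_buyers_sorted_vals_nth_of_prefix:
  assumes anti: "antimono_on {1..N} (\<lambda>i. b (q i))" and "T \<le> N" "0 < k"
    and k_le: "k \<le> card {i \<in> {1..T}. \<pi> i \<in> L}"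
  shows "b (q T) \<le> buyers_sorted (vals N \<pi> L b q) ! (k - 1)"
proof -
  have "{i \<in> {1..T}. \<pi> i \<in> L} \<subseteq> {i \<in> {1..N}. \<pi> i \<in> L \<and> b (q T) \<le> b (q i)}"
    using \<open>T \<le> N\<close> by (auto intro: monotone_onD[OF anti])
  then have "card {i \<in> {1..T}. \<pi> i \<in> L} \<le> card {i \<in> {1..N}. \<pi> i \<in> L \<and> b (q T) \<le> b (q i)}"
    by (intro card_mono) auto
  then have "k \<le> size {#u \<in># mset (vals N \<pi> L b q). b (q T) \<le> u#}"
    unfolding size_filter_mset_vals using k_le by linarith
  moreover have "size {#u \<in># mset (vals N \<pi> L b q). b (q T) \<le> u#} \<le> length (vals N \<pi> L b q)"
    by (metis size_filter_mset_lesseq size_mset)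
  ultimately show ?thesis
    using \<open>0 < k\<close> by (subst le_buyers_sorted_nth_iff) auto
qed

lemma le_sellers_sorted_vals_nth_of_suffix:
  assumes anti: "antimono_on {1..N} (\<lambda>i. s (q i))" and "T \<in> {1..N}" "0 < k"
    and k_le: "k \<le> length (vals N \<pi> L s q)"
    and few_after: "card {i \<in> {1..N}. \<pi> i \<in> L \<and> T < i} < k"
  shows "s (q T) \<le> sellers_sorted (vals N \<pi> L s q) ! (k - 1)"
proof (rule ccontr)
  define y where "y = sellers_sorted (vals N \<pi> L s q) ! (k - 1)"
  assume "\<not> s (q T) \<le> y"
  then have "{i \<in> {1..N}. \<pi> i \<in> L \<and> s (q i) \<le> y} \<subseteq> {i \<in> {1..N}. \<pi> i \<in> L \<and> T < i}"
    using monotone_onD[OF anti] \<open>T \<in> {1..N}\<close> by (force simp: not_less)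
  then have "card {i \<in> {1..N}. \<pi> i \<in> L \<and> s (q i) \<le> y} \<le> card {i \<in> {1..N}. \<pi> i \<in> L \<and> T < i}"
    by (intro card_mono) auto
  moreover have "k - 1 < size {#u \<in># mset (vals N \<pi> L s q). u \<le> y#}"
    using \<open>0 < k\<close> k_le by (subst sellers_sorted_nth_le_iff[symmetric]) (auto simp: y_def)
  ultimately show False
    unfolding size_filter_mset_vals using few_after by linarith
qed

lemma card_prefix_BO:
  assumes "\<pi> \<in> PiSet n m c" "T \<le> Nagents n m c"
  shows "T \<le> card {i \<in> {1..T}. \<pi> i = BO} + (n + 2 * c)"
proof -
  define N where "N = Nagents n m c"
  have "{1..T} \<subseteq> {i \<in> {1..T}. \<pi> i = BO} \<union> ({1..N} - preim N \<pi> BO)"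
    using assms(2) by (auto simp: preim_def N_def)
  then have "card {1..T} \<le> card ({i \<in> {1..T}. \<pi> i = BO} \<union> ({1..N} - preim N \<pi> BO))"
    by (intro card_mono) auto
  also have "\<dots> \<le> card {i \<in> {1..T}. \<pi> i = BO} + card ({1..N} - preim N \<pi> BO)"
    by (rule card_Un_le)
  finally have "T \<le> card {i \<in> {1..T}. \<pi> i = BO} + card ({1..N} - preim N \<pi> BO)"
    by simp
  moreover have "card ({1..N} - preim N \<pi> BO) = n + 2 * c"
    using assms(1) by (subst card_Diff_subset) (auto simp: PiSet_def preim_def N_def Nagents_def)
  ultimately show ?thesis
    by simp
qed

lemma ten_pp_le: "10 * pp n \<le> n + 9"
proof -
  have "real (pp n) < real n / 10 + 1"
    unfolding pp_def by linarith
  then show ?thesis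
    by linarith
qed

lemma threshold_of_E1:
  fixes n m c :: nat and \<pi> :: "nat \<Rightarrow> label"
  defines "N \<equiv> Nagents n m c"
  assumes \<pi>: "\<pi> \<in> E1 n m c" and "n \<le> m"
  obtains T t where "T \<in> {1..N}" "T < t" "t \<in> preim N \<pi> SN"
    "\<And>k. k \<le> card {i \<in> {1..T}. \<pi> i = BO} \<or> card {i \<in> {1..N}. \<pi> i = SO \<and> T < i} < k"
proof -
  define p where "p = pp n"
  define J where "J = {N - p + 1..N}"
  have two_new: "2 \<le> card (J \<inter> preim N \<pi> SN)"
    using \<pi> by (simp add: E1_def Let_def N_def p_def J_def)
  then obtain t where t: "t \<in> J" "t \<in> preim N \<pi> SN"
    by (metis card.empty disjoint_iff_not_equal inf_bot_right not_numeral_le_zero)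
  have "2 \<le> p"
    using two_new card_mono[of J "J \<inter> preim N \<pi> SN"] by (simp add: J_def)
  then have p_small: "2 * p \<le> m + 2" "p < N"
    using ten_pp_le[of n] \<open>n \<le> m\<close> by (simp_all add: p_def N_def Nagents_def)
  have old_after: "card {i \<in> {1..N}. \<pi> i = SO \<and> N - p < i} + 2 \<le> p"
  proof -
    have "{i \<in> {1..N}. \<pi> i = SO \<and> N - p < i} \<union> (J \<inter> preim N \<pi> SN) \<subseteq> J"
      by (auto simp: J_def)
    then have "card ({i \<in> {1..N}. \<pi> i = SO \<and> N - p < i} \<union> (J \<inter> preim N \<pi> SN)) \<le> p"
      using card_mono[of J] p_small by (simp add: J_def)
    then show ?thesis
      using two_new by (subst (asm) card_Un_disjoint) (auto simp: preim_def)
  qed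
  have "k \<le> card {i \<in> {1..N - p}. \<pi> i = BO} \<or> card {i \<in> {1..N}. \<pi> i = SO \<and> N - p < i} < k" for k
    using card_prefix_BO[of \<pi> n m c "N - p"] \<pi> p_small old_after
    by (auto simp: E1_def N_def Nagents_def)
  then show thesis
    using t p_small by (intro that[of "N - p" t]) (auto simp: J_def)
qed

lemma threshold_of_not_E1:
  fixes n m c :: nat and \<pi> :: "nat \<Rightarrow> label"
  defines "N \<equiv> Nagents n m c"
  assumes \<pi>: "\<pi> \<in> PiSet n m c - E2 n m c" "\<pi> \<notin> E1 n m c" and "1 \<le> c"
  obtains T t where "T \<in> {1..N}" "T < t" "t \<in> preim N \<pi> SN"
    "\<And>k. k \<le> n \<Longrightarrow> k \<le> card {i \<in> {1..T}. \<pi> i = BO}"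
proof -
  have "\<not> preim N \<pi> SN \<subseteq> {1..2 * n + 2 * c}"
    using \<pi> by (simp add: E2_def N_def)
  then obtain t where "t \<in> preim N \<pi> SN" "t \<notin> {1..2 * n + 2 * c}"
    by blast
  then have t: "t \<in> preim N \<pi> SN" "2 * n + 2 * c < t" "t \<le> N"
    by (auto simp: preim_def)
  show thesis
    using t \<open>1 \<le> c\<close> card_prefix_BO[of \<pi> n m c "2 * n + 2 * c"] \<pi>
    by (intro that[of "2 * n + 2 * c" t]) (auto simp: N_def)
qed

lemma exists_threshold_before_new_seller:
  fixes n m c :: nat and \<pi> :: "nat \<Rightarrow> label"
  defines "N \<equiv> Nagents n m c"
  assumes "\<pi> \<in> PiSet n m c - E2 n m c" and "n \<le> m" and "1 \<le> c"
  obtains T t where "T \<in> {1..N}" "T < t" "t \<in> preim N \<pi> SN"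
    "\<And>k. k \<le> n \<Longrightarrow> k \<le> card {i \<in> {1..T}. \<pi> i = BO} \<or> card {i \<in> {1..N}. \<pi> i = SO \<and> T < i} < k"
proof (cases "\<pi> \<in> E1 n m c")
  case True
  obtain T t where "T \<in> {1..N}" "T < t" "t \<in> preim N \<pi> SN"
    "\<And>k. k \<le> card {i \<in> {1..T}. \<pi> i = BO} \<or> card {i \<in> {1..N}. \<pi> i = SO \<and> T < i} < k"
    using threshold_of_E1[OF True \<open>n \<le> m\<close>] unfolding N_def by blast
  then show thesis
    by (intro that[of T t]) simp_all
next
  case False
  obtain T t where "T \<in> {1..N}" "T < t" "t \<in> preim N \<pi> SN"
    "\<And>k. k \<le> n \<Longrightarrow> k \<le> card {i \<in> {1..T}. \<pi> i = BO}"
    using threshold_of_not_E1[OF assms(2) False assms(4)] unfolding N_def by blast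
  then show thesis
    by (intro that[of T t]) simp_all
qed

lemma seller_value_le_last_trading_buyer:
  fixes N :: nat and \<pi> :: "nat \<Rightarrow> label" and q :: "nat \<Rightarrow> real" and b s :: "real \<Rightarrow> real"
  defines "bo \<equiv> vals N \<pi> {BO} b q" and "so \<equiv> vals N \<pi> {SO} s q"
  assumes b_anti: "antimono_on {1..N} (\<lambda>i. b (q i))"
    and s_anti: "antimono_on {1..N} (\<lambda>i. s (q i))"
    and s_le_b: "\<And>i. i \<in> {1..N} \<Longrightarrow> s (q i) \<le> b (q i)"
    and r: "0 < eff_r bo so" and T: "T \<in> {1..N}" "T < t" "t \<le> N"
    and threshold: "eff_r bo so \<le> card {i \<in> {1..T}. \<pi> i = BO}
      \<or> card {i \<in> {1..N}. \<pi> i = SO \<and> T < i} < eff_r bo so"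
  shows "s (q t) \<le> buyers_sorted bo ! (eff_r bo so - 1)"
proof -
  define r where "r = eff_r bo so"
  define x where "x = buyers_sorted bo ! (r - 1)"
  have "s (q t) \<le> s (q T)"
    using T by (auto intro: monotone_onD[OF s_anti])
  moreover have "s (q T) \<le> x"
    using threshold unfolding r_def[symmetric]
  proof
    assume "r \<le> card {i \<in> {1..T}. \<pi> i = BO}"
    then have "b (q T) \<le> x"
      using r T b_anti
        le_buyers_sorted_vals_nth_of_prefix[where b = b and q = q and N = N and T = T and k = r
          and \<pi> = \<pi> and L = "{BO}"]
      by (simp add: x_def bo_def r_def)
    then show ?thesis
      using s_le_b[OF T(1)] by simp
  next
    assume "card {i \<in> {1..N}. \<pi> i = SO \<and> T < i} < r"
    then have "s (q T) \<le> sellers_sorted so ! (r - 1)"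
      using r T eff_r_le_length(2)[of bo so] s_anti
        le_sellers_sorted_vals_nth_of_suffix[where s = s and q = q and N = N and T = T and k = r
          and \<pi> = \<pi> and L = "{SO}"]
      by (simp add: r_def so_def)
    also have "\<dots> \<le> x"
      using r sellers_sorted_nth_le_buyers_sorted_nth[of "r - 1" bo so]
      by (simp add: x_def r_def)
    finally show ?thesis .
  qed
  ultimately show ?thesis
    by (simp add: x_def r_def)
qed

theorem lemma3p2:
  fixes FB FS :: "real measure" and n m c :: nat and q :: "nat \<Rightarrow> real" and \<pi> :: "nat \<Rightarrow> label"
  assumes "real_distribution FB" and "real_distribution FS"
    and "\<forall>x. 0 < x \<and> x < 1 \<longrightarrow> quantile FB x \<ge> quantile FS x"
    and "m \<ge> n" and "n \<ge> 20" and "c \<ge> 1"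
    and "\<forall>i \<in> {1..Nagents n m c}. 0 < q i \<and> q i < 1"
    and "\<forall>i j. 1 \<le> i \<and> i \<le> j \<and> j \<le> Nagents n m c \<longrightarrow> q j \<le> q i"
    and "\<pi> \<in> PiSet n m c - E2 n m c"
  shows "STR_gft (Nagents n m c) (quantile FB) (quantile FS) q \<pi>
           \<ge> OPT_gft (Nagents n m c) (quantile FB) (quantile FS) q \<pi>"
proof -
  define N b s where "N = Nagents n m c" and "b = quantile FB" and "s = quantile FS"
  have b_anti: "antimono_on {1..N} (\<lambda>i. b (q i))" and s_anti: "antimono_on {1..N} (\<lambda>i. s (q i))"
    using assms(7,8) by (auto intro!: monotone_onI quantile_mono assms(1,2) simp: N_def b_def s_def)
  have s_le_b: "s (q i) \<le> b (q i)" if "i \<in> {1..N}" for i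
    using assms(3,7) that by (simp add: N_def b_def s_def)
  define bo so where "bo = vals N \<pi> {BO} b q" and "so = vals N \<pi> {SO} s q"
  obtain T t where T: "T \<in> {1..N}" "T < t" and t: "t \<in> {1..N}" "\<pi> t = SN" and threshold:
    "\<And>k. k \<le> n \<Longrightarrow> k \<le> card {i \<in> {1..T}. \<pi> i = BO} \<or> card {i \<in> {1..N}. \<pi> i = SO \<and> T < i} < k"
    using exists_threshold_before_new_seller[OF assms(9,4,6)] unfolding N_def preim_def by blast
  have "eff_r bo so \<le> n"
    using eff_r_le_length(2)[of bo so] assms(9)
    by (simp add: so_def length_vals PiSet_def preim_def N_def)
  then have cheap: "0 < eff_r bo so \<Longrightarrow> s (q t) \<le> buyers_sorted bo ! (eff_r bo so - 1)"
    using seller_value_le_last_trading_buyer[OF b_anti s_anti s_le_b] T t threshold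
    by (simp add: bo_def so_def)
  have buyers: "mset bo \<subseteq># mset (vals N \<pi> {BO, BN} b q)"
    unfolding bo_def by (subst insert_is_Un[of BO], subst mset_vals_Un) auto
  have sellers: "mset (vals N \<pi> {SO, SN} s q) = mset so + mset (vals N \<pi> {SN} s q)"
    unfolding so_def by (subst insert_is_Un[of SO], subst mset_vals_Un) auto
  then have new_seller: "s (q t) \<in># mset (vals N \<pi> {SO, SN} s q) - mset so"
    using mem_vals[OF t(1), of \<pi> "{SN}"] t(2) by simp
  from sellers have "mset so \<subseteq># mset (vals N \<pi> {SO, SN} s q)"
    by simp
  from first_best_le_str_gft_of_new_seller[OF buyers this new_seller cheap] show ?thesis
    by (simp add: STR_gft_def OPT_gft_def N_def b_def s_def bo_def so_def)
qed

end
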